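(* Let $d\ge 1$ be an integer and let ${\cal P}=\{\Pi_i,\pi_i\}_{i}$ be any (discrete) ensemble of pure states on ${\cal H}_d=\mathbb{C}^d$, where $\Pi_i=|\psi_i\rangle\langle\psi_i|$ with $\|\psi_i\|=1$, $\pi_i\ge 0$ and $\sum_i\pi_i=1$. Then the accessible fidelity of ${\cal P}$ satisfies $$F_{\cal P}\ge \frac{2}{d+1}.$$
   Context: For a measurement ${\cal E}=\{E_b\}$ (a POVM on ${\cal H}_d$: positive operators with $\sum_b E_b=I$) and a state-reproduction strategy ${\cal M}: b\mapsto\sigma_b$ (an assignment of a density operator $\sigma_b$ on ${\cal H}_d$ to each outcome $b$), the average fidelity is $F_{\cal P}({\cal E},{\cal M})=\sum_{b,i}\pi_i\,{\rm tr}(\Pi_iE_b)\,{\rm tr}(\Pi_i\sigma_b)$. The accessible fidelity of ${\cal P}$ is $F_{\cal P}=\sup_{{\cal E},{\cal M}}F_{\cal P}({\cal E},{\cal M})$, the supremum over all POVMs and all reproduction strategies. *)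

theory Defs
  imports "HOL-Analysis.Analysis"
begin

text \<open>Operators on H_d = C^d are d x d complex matrices, with d = CARD('d) for a finite type 'd.\<close>

definition ctrace :: "complex^'d^'d \<Rightarrow> complex" where
  "ctrace A = (\<Sum>i\<in>UNIV. A $ i $ i)"

definition positive_op :: "complex^'d^'d \<Rightarrow> bool" where
  "positive_op A \<longleftrightarrow> (\<forall>x::complex^'d.
     let q = (\<Sum>i\<in>UNIV. cnj (x $ i) * (A *v x) $ i) in Im q = 0 \<and> Re q \<ge> 0)"

definition density_op :: "complex^'d^'d \<Rightarrow> bool" where
  "density_op \<sigma> \<longleftrightarrow> positive_op \<sigma> \<and> ctrace \<sigma> = 1"

definition proj :: "complex^'d \<Rightarrow> complex^'d^'d" where
  "proj \<psi> = (\<chi> j k. \<psi> $ j * cnj (\<psi> $ k))"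

definition is_povm :: "nat set \<Rightarrow> (nat \<Rightarrow> complex^'d^'d) \<Rightarrow> bool" where
  "is_povm B E \<longleftrightarrow> finite B \<and> (\<forall>b\<in>B. positive_op (E b)) \<and> (\<Sum>b\<in>B. E b) = mat 1"

text \<open>Pure-state ensemble {Pi_i, pi_i}, indexed by nat (discrete; finite ensembles via zero weights).\<close>
definition pure_ensemble :: "(nat \<Rightarrow> complex^'d) \<Rightarrow> (nat \<Rightarrow> real) \<Rightarrow> bool" where
  "pure_ensemble \<psi> p \<longleftrightarrow> (\<forall>i. norm (\<psi> i) = 1) \<and> (\<forall>i. p i \<ge> 0) \<and> p sums 1"

definition avg_fidelity ::
  "(nat \<Rightarrow> complex^'d) \<Rightarrow> (nat \<Rightarrow> real) \<Rightarrow> nat set \<Rightarrow> (nat \<Rightarrow> complex^'d^'d)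
     \<Rightarrow> (nat \<Rightarrow> complex^'d^'d) \<Rightarrow> real" where
  "avg_fidelity \<psi> p B E \<sigma> =
     (\<Sum>b\<in>B. \<Sum>i. p i * Re (ctrace (proj (\<psi> i) ** E b)) * Re (ctrace (proj (\<psi> i) ** \<sigma> b)))"

definition accessible_fidelity :: "(nat \<Rightarrow> complex^'d) \<Rightarrow> (nat \<Rightarrow> real) \<Rightarrow> real" where
  "accessible_fidelity \<psi> p =
     Sup {avg_fidelity \<psi> p B E \<sigma> | B E \<sigma>. is_povm B E \<and> (\<forall>b\<in>B. density_op (\<sigma> b))}"

end

theory Submission
  imports Defs
begin

(* The bound is attained by one explicit measure-and-prepare strategy. Measure with the basis
   projectors |j><j|, weighted 1/(d+1), together with the projectors onto the 4^d phase vectors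
   v_f = (i^(f j))_j, weighted d/((d+1) 4^d) each, and on outcome j (resp. f) prepare |j><j|
   (resp. |v_f><v_f|/d). Orthogonality of the characters f |-> i^(f j) of (Z/4)^d makes this a
   POVM, and their fourth moments show that for a unit vector x the mean of |<v_f,x>|^4 over f
   is 2 - Q with Q = sum_j |x_j|^4. The basis outcomes contribute Q/(d+1) and the phase outcomes
   (2 - Q)/(d+1), so every pure state, and hence every ensemble, is reproduced with fidelity
   exactly 2/(d+1). *)

section \<open>Quadratic forms\<close>

definition qform :: "complex^'d^'d \<Rightarrow> complex^'d \<Rightarrow> complex" where
  "qform A x = (\<Sum>k\<in>UNIV. cnj (x $ k) * (A *v x) $ k)"

definition cinner :: "complex^'d \<Rightarrow> complex^'d \<Rightarrow> complex" where
  "cinner v x = (\<Sum>j\<in>UNIV. cnj (v $ j) * x $ j)"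

lemma positive_op_iff_qform:
  "positive_op A \<longleftrightarrow> (\<forall>x. Im (qform A x) = 0 \<and> 0 \<le> Re (qform A x))"
  by (simp add: positive_op_def qform_def)

lemma ctrace_proj_mult: "ctrace (proj x ** A) = qform A x"
proof -
  have "ctrace (proj x ** A) = (\<Sum>i\<in>UNIV. \<Sum>k\<in>UNIV. x $ i * cnj (x $ k) * A $ k $ i)"
    by (simp add: ctrace_def proj_def matrix_matrix_mult_def)
  also have "\<dots> = (\<Sum>k\<in>UNIV. \<Sum>i\<in>UNIV. x $ i * cnj (x $ k) * A $ k $ i)"
    by (rule sum.swap)
  finally show ?thesis
    by (simp add: qform_def matrix_vector_mult_def sum_distrib_left mult_ac)
qed

lemma qform_sum: "qform (\<Sum>b\<in>B. A b) x = (\<Sum>b\<in>B. qform (A b) x)"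
  by (induction B rule: infinite_finite_induct)
     (simp_all add: qform_def matrix_vector_mult_def sum.distrib ring_distribs)

lemma qform_scaleR: "qform (c *\<^sub>R A) x = of_real c * qform A x"
  by (simp add: qform_def matrix_vector_mult_def sum_distrib_left mult_ac
      scaleR_conv_of_real[where 'a=complex])

lemma norm_vec_power2: "(norm x)\<^sup>2 = (\<Sum>j\<in>UNIV. (cmod (x $ j))\<^sup>2)"
  by (simp add: norm_vec_def L2_set_def sum_nonneg)

lemma cnj_mult_self: "cnj z * z = of_real ((cmod z)\<^sup>2)"
  using complex_norm_square[of z] by (simp add: mult.commute)

lemma qform_mat_1: "qform (mat 1) x = of_real ((norm x)\<^sup>2)"
  by (simp add: qform_def norm_vec_power2 cnj_mult_self)

lemma qform_proj: "qform (proj v) x = of_real ((cmod (cinner v x))\<^sup>2)"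
proof -
  have "qform (proj v) x = cnj (cinner v x) * cinner v x"
    by (simp add: qform_def proj_def cinner_def matrix_vector_mult_def sum_distrib_left
        sum_distrib_right mult_ac) (rule sum.swap)
  then show ?thesis by (simp add: cnj_mult_self)
qed

lemma Re_qform_scaleR_proj: "Re (qform (c *\<^sub>R proj v) x) = c * (cmod (cinner v x))\<^sup>2"
  by (simp add: qform_scaleR qform_proj)

lemma qform_axis: "qform A (axis k 1) = A $ k $ k"
  by (simp add: qform_def axis_def matrix_vector_mult_def if_distrib[of cnj]
      if_distrib[of "\<lambda>z. _ * z"] if_distrib[of "\<lambda>z. z * _"] cong: if_cong)

lemma cinner_axis: "cinner (axis j 1) x = x $ j"
  by (simp add: cinner_def axis_def if_distrib[of cnj] if_distrib[of "\<lambda>z. z * _"]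
      cong: if_cong)

lemma ctrace_scaleR: "ctrace (c *\<^sub>R A) = of_real c * ctrace A"
  by (simp add: ctrace_def sum_distrib_left scaleR_conv_of_real[where 'a=complex])

lemma ctrace_proj: "ctrace (proj v) = of_real ((norm v)\<^sup>2)"
  by (simp add: ctrace_def proj_def norm_vec_power2 mult.commute[of _ "cnj _"] cnj_mult_self)

lemma positive_op_proj: "positive_op (proj v)"
  by (simp add: positive_op_iff_qform qform_proj)

lemma positive_op_scaleR_proj: "0 \<le> c \<Longrightarrow> positive_op (c *\<^sub>R proj v)"
  by (simp add: positive_op_iff_qform qform_scaleR qform_proj)

section \<open>Random phases\<close>

type_synonym 'd phases = "'d \<Rightarrow> bool \<times> bool"

definition phase :: "bool \<times> bool \<Rightarrow> complex" where
  "phase u = (if fst u then -1 else 1) * (if snd u then \<i> else 1)"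

definition phase_succ :: "bool \<times> bool \<Rightarrow> bool \<times> bool" where
  "phase_succ u = (fst u \<noteq> snd u, \<not> snd u)"

lemma phase_phase_succ: "phase (phase_succ u) = \<i> * phase u"
  by (cases u) (auto simp: phase_def phase_succ_def)

lemma cnj_phase: "cnj (phase u) = inverse (phase u)"
  by (cases u) (auto simp: phase_def)

lemma phase_nonzero [simp]: "phase u \<noteq> 0"
  by (cases u) (auto simp: phase_def)

lemma norm_phase [simp]: "cmod (phase u) = 1"
  by (cases u) (auto simp: phase_def)

definition phase_shift :: "'d \<Rightarrow> 'd phases \<Rightarrow> 'd phases" where
  "phase_shift r f = f(r := phase_succ (f r))"

lemma phase_shift_apply: "phase_shift r f x = (if x = r then phase_succ (f r) else f x)"
  by (simp add: phase_shift_def)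

lemma bij_phase_shift: "bij (phase_shift (r :: 'd::finite))"
proof -
  have "inj phase_succ"
    by (auto simp: inj_def phase_succ_def)
  have "inj (phase_shift r)"
  proof (rule injI)
    fix f g assume "phase_shift r f = phase_shift r g"
    then have "phase_shift r f x = phase_shift r g x" for x
      by simp
    with \<open>inj phase_succ\<close> show "f = g"
      by (metis phase_shift_apply inj_eq ext)
  qed
  then show ?thesis
    by (simp add: bij_def finite_UNIV_inj_surj)
qed

lemma sum_phases_eq_0:
  fixes g :: "'d::finite phases \<Rightarrow> complex"
  assumes "\<And>f. g (phase_shift r f) = c * g f" and "c \<noteq> 1"
  shows "(\<Sum>f\<in>UNIV. g f) = 0"
proof -
  have "(\<Sum>f\<in>UNIV. g f) = (\<Sum>f\<in>UNIV. g (phase_shift r f))"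
    using sum.reindex_bij_betw[OF bij_phase_shift[of r], of g] by simp
  also have "\<dots> = c * (\<Sum>f\<in>UNIV. g f)"
    by (simp add: assms(1) sum_distrib_left)
  finally show ?thesis
    using \<open>c \<noteq> 1\<close> by (metis mult_cancel_right1)
qed

lemma phase_moment2:
  fixes j k :: "'d::finite"
  shows "(\<Sum>f\<in>UNIV. cnj (phase (f j)) * phase (f k)) =
    (if j = k then of_nat CARD('d phases) else 0)"
proof (cases "j = k")
  case False
  then show ?thesis
    by (auto intro!: sum_phases_eq_0[where r = k and c = "\<i>"]
        simp: phase_shift_apply phase_phase_succ mult_ac)
qed (simp add: cnj_phase)

lemma phase_moment4:
  fixes j k l m :: "'d::finite"
  shows "(\<Sum>f\<in>UNIV. cnj (phase (f j)) * phase (f k) * cnj (phase (f l)) * phase (f m)) =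
    (if (j = k \<and> l = m) \<or> (j = m \<and> l = k) then of_nat CARD('d phases) else 0)"
proof (cases "(j = k \<and> l = m) \<or> (j = m \<and> l = k)")
  case True
  then have "cnj (phase (f j)) * phase (f k) * cnj (phase (f l)) * phase (f m) = 1"
    for f :: "'d phases"
    by (auto simp: cnj_phase field_simps)
  with True show ?thesis
    by simp
next
  case False
  \<comment> \<open>Some index carries a nonzero net charge; shifting the phase at that index multiplies
    every summand by the same root of unity \<noteq> 1.\<close>
  show ?thesis
  proof (cases "k \<noteq> j \<and> k \<noteq> l")
    case True
    with False show ?thesis
      by (auto intro!: sum_phases_eq_0[where r = k and c = "if m = k then -1 else \<i>"]
          simp: phase_shift_apply phase_phase_succ mult_ac split: if_splits)
  next
    case False
    with \<open>\<not> ((j = k \<and> l = m) \<or> (j = m \<and> l = k))\<close> show ?thesis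
      by (auto intro!: sum_phases_eq_0[where r = m and c = "\<i>"]
          simp: phase_shift_apply phase_phase_succ mult_ac)
  qed
qed

definition phase_vec :: "'d phases \<Rightarrow> complex^'d" where
  "phase_vec f = (\<chi> j. phase (f j))"

lemma sum_qform_phase_twirl:
  fixes A :: "complex^'d::finite^'d"
  shows "(\<Sum>f\<in>UNIV. qform A (phase_vec f * x)) =
    of_nat CARD('d phases) * (\<Sum>k\<in>UNIV. cnj (x $ k) * x $ k * A $ k $ k)"
proof -
  have "(\<Sum>f\<in>UNIV. qform A (phase_vec f * x)) =
      (\<Sum>f\<in>UNIV. \<Sum>k\<in>UNIV. \<Sum>j\<in>UNIV.
        cnj (phase (f k)) * phase (f j) * (cnj (x $ k) * A $ k $ j * x $ j))"
    by (simp add: qform_def phase_vec_def times_vec_def matrix_vector_mult_def sum_distrib_left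
        mult_ac)
  also have "\<dots> = (\<Sum>k\<in>UNIV. \<Sum>j\<in>UNIV.
      (\<Sum>f\<in>UNIV. cnj (phase (f k)) * phase (f j)) * (cnj (x $ k) * A $ k $ j * x $ j))"
    by (simp only: sum.swap[of _ "UNIV :: 'd phases set"] sum_distrib_right)
  also have "\<dots> = of_nat CARD('d phases) * (\<Sum>k\<in>UNIV. cnj (x $ k) * x $ k * A $ k $ k)"
    by (simp only: phase_moment2)
       (simp add: if_distrib[of "\<lambda>z. _ * z"] sum_distrib_left mult_ac cong: if_cong)
  finally show ?thesis .
qed

(* Far from sharp (the truth is 1), but any bound will do: it only serves to make the set in
   accessible_fidelity bounded above. The phase twirl of x has x itself among its nonnegative
   terms. *)
lemma density_op_qform_le:
  fixes \<sigma> :: "complex^'d::finite^'d"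
  assumes "density_op \<sigma>" and "norm x = 1"
  shows "Re (qform \<sigma> x) \<le> real CARD('d phases)"
proof -
  have pos: "\<And>y. 0 \<le> Re (qform \<sigma> y)" and tr: "ctrace \<sigma> = 1"
    using assms(1) by (auto simp: density_op_def positive_op_iff_qform)
  have diag: "0 \<le> Re (\<sigma> $ k $ k)" for k
    using pos[of "axis k 1"] by (simp add: qform_axis)
  have "x = phase_vec (\<lambda>_. (False, False)) * x"
    by (simp add: phase_vec_def phase_def times_vec_def vec_eq_iff)
  then have "Re (qform \<sigma> x) \<le> (\<Sum>f\<in>UNIV. Re (qform \<sigma> (phase_vec f * x)))"
    using member_le_sum[of "\<lambda>_. (False, False)" UNIV "\<lambda>f. Re (qform \<sigma> (phase_vec f * x))"]
      pos by simp
  also have "\<dots> = Re (\<Sum>f\<in>UNIV. qform \<sigma> (phase_vec f * x))"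
    by (simp add: Re_sum)
  also have "\<dots> = real CARD('d phases) * (\<Sum>k\<in>UNIV. (cmod (x $ k))\<^sup>2 * Re (\<sigma> $ k $ k))"
    by (simp add: sum_qform_phase_twirl cnj_mult_self Re_sum flip: of_real_power)
  also have "\<dots> \<le> real CARD('d phases) * (\<Sum>k\<in>UNIV. Re (\<sigma> $ k $ k))"
    using Finite_Cartesian_Product.norm_nth_le[of x] assms(2) diag
    by (intro mult_left_mono sum_mono mult_left_le_one_le) (auto simp: abs_square_le_1)
  also have "(\<Sum>k\<in>UNIV. Re (\<sigma> $ k $ k)) = 1"
    using tr by (simp add: ctrace_def flip: Re_sum)
  finally show ?thesis
    by simp
qed

lemma sum_sum_pair_indicator:
  fixes j l :: "'d::finite" and t :: "'d \<Rightarrow> 'd \<Rightarrow> complex"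
  shows "(\<Sum>k\<in>UNIV. \<Sum>m\<in>UNIV.
      (if (j = k \<and> l = m) \<or> (j = m \<and> l = k) then c else 0) * t k m) =
    (if j = l then c * t j j else c * t j l + c * t l j)"
proof -
  have "(if (j = k \<and> l = m) \<or> (j = m \<and> l = k) then c else 0) * t k m =
      (if m = l then (if k = j then c * t k m else 0) else 0) +
      (if m = j then (if k = l then c * t k m else 0) else 0) -
      (if m = l then (if k = j then (if j = l then c * t k m else 0) else 0) else 0)" for k m
    by auto
  then show ?thesis
    by (simp add: sum.distrib sum_subtractf)
qed

lemma of_real_norm_pow4: "complex_of_real ((cmod z)^4) = z * z * (cnj z * cnj z)"
proof -
  have "complex_of_real ((cmod z)^4) = (complex_of_real ((cmod z)\<^sup>2))\<^sup>2"
    by simp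
  then show ?thesis
    unfolding cnj_mult_self[symmetric] by (simp add: power2_eq_square mult_ac)
qed

lemma sum_norm_cinner_phase_vec_pow4:
  fixes x :: "complex^'d::finite"
  shows "(\<Sum>f\<in>UNIV. (cmod (cinner (phase_vec f) x))^4) =
    real CARD('d phases) * (2 * (norm x)^4 - (\<Sum>j\<in>UNIV. (cmod (x $ j))^4))"
proof -
  define N where "N = (of_nat CARD('d phases) :: complex)"
  define w where "w j = x $ j * cnj (x $ j)" for j
  have sum_w: "(\<Sum>j\<in>UNIV. w j) = of_real ((norm x)\<^sup>2)"
    by (simp add: w_def norm_vec_power2 mult.commute[of _ "cnj _"] cnj_mult_self)
  define t where "t j k l m = x $ j * cnj (x $ k) * x $ l * cnj (x $ m)" for j k l m
  have "complex_of_real (\<Sum>f\<in>UNIV. (cmod (cinner (phase_vec f) x))^4) =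
      (\<Sum>f\<in>UNIV. \<Sum>j\<in>UNIV. \<Sum>k\<in>UNIV. \<Sum>l\<in>UNIV. \<Sum>m\<in>UNIV.
        cnj (phase (f j)) * phase (f k) * cnj (phase (f l)) * phase (f m) * t j k l m)"
    by (simp only: of_real_sum of_real_norm_pow4 cinner_def cnj_sum sum_product)
       (simp add: phase_vec_def t_def mult_ac)
  also have "\<dots> = (\<Sum>j\<in>UNIV. \<Sum>k\<in>UNIV. \<Sum>l\<in>UNIV. \<Sum>m\<in>UNIV.
        (\<Sum>f\<in>UNIV. cnj (phase (f j)) * phase (f k) * cnj (phase (f l)) * phase (f m)) * t j k l m)"
    by (simp only: sum.swap[of _ "UNIV :: 'd phases set"] sum_distrib_right)
  also have "\<dots> = (\<Sum>j\<in>UNIV. \<Sum>l\<in>UNIV. \<Sum>k\<in>UNIV. \<Sum>m\<in>UNIV.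
        (if (j = k \<and> l = m) \<or> (j = m \<and> l = k) then N else 0) * t j k l m)"
    by (simp only: phase_moment4 N_def) (rule sum.cong[OF refl], rule sum.swap)
  also have "\<dots> = (\<Sum>j\<in>UNIV. \<Sum>l\<in>UNIV.
        if j = l then N * t j j l j else N * t j j l l + N * t j l l j)"
    by (simp only: sum_sum_pair_indicator)
  also have "\<dots> = (\<Sum>j\<in>UNIV. \<Sum>l\<in>UNIV.
        2 * N * w j * w l - (if j = l then N * w j * w j else 0))"
    by (intro sum.cong refl) (simp add: t_def w_def algebra_simps)
  also have "\<dots> = N * (2 * (\<Sum>j\<in>UNIV. w j)\<^sup>2 - (\<Sum>j\<in>UNIV. (w j)\<^sup>2))"
    by (simp add: sum_subtractf sum_distrib_left sum_distrib_right power2_eq_square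
        right_diff_distrib mult_ac)
  also have "\<dots> = complex_of_real
      (real CARD('d phases) * (2 * (norm x)^4 - (\<Sum>j\<in>UNIV. (cmod (x $ j))^4)))"
    unfolding sum_w by (simp add: N_def w_def mult.commute[of _ "cnj _"] cnj_mult_self)
  finally show ?thesis
    by (simp only: of_real_eq_iff)
qed

section \<open>Fidelity of a measure-and-prepare strategy\<close>

lemma pure_ensemble_sums_mult: "pure_ensemble \<psi> p \<Longrightarrow> (\<lambda>i. p i * c) sums c"
  using sums_mult2[of p 1 c] by (simp add: pure_ensemble_def)

definition state_fidelity ::
  "'b set \<Rightarrow> ('b \<Rightarrow> complex^'d^'d) \<Rightarrow> ('b \<Rightarrow> complex^'d^'d) \<Rightarrow> complex^'d \<Rightarrow> real" where
  "state_fidelity B E \<sigma> x = (\<Sum>b\<in>B. Re (qform (E b) x) * Re (qform (\<sigma> b) x))"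

lemma povm_qform_nonneg: "is_povm B E \<Longrightarrow> b \<in> B \<Longrightarrow> 0 \<le> Re (qform (E b) x)"
  by (simp add: is_povm_def positive_op_iff_qform)

lemma sum_povm_qform:
  assumes "is_povm B E" and "norm x = 1"
  shows "(\<Sum>b\<in>B. Re (qform (E b) x)) = 1"
proof -
  have "(\<Sum>b\<in>B. qform (E b) x) = qform (\<Sum>b\<in>B. E b) x"
    by (rule qform_sum[symmetric])
  also have "\<dots> = 1"
    using assms by (simp add: is_povm_def qform_mat_1)
  finally have "Re (\<Sum>b\<in>B. qform (E b) x) = 1"
    by simp
  then show ?thesis
    by (simp add: Re_sum)
qed

lemma state_fidelity_term_nonneg:
  assumes "is_povm B E" and "\<forall>b\<in>B. density_op (\<sigma> b)" and "b \<in> B"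
  shows "0 \<le> Re (qform (E b) x) * Re (qform (\<sigma> b) x)"
  using assms povm_qform_nonneg[OF assms(1,3)]
  by (simp add: density_op_def positive_op_iff_qform)

lemma state_fidelity_le:
  fixes \<sigma> :: "nat \<Rightarrow> complex^'d::finite^'d"
  assumes "is_povm B E" and "\<forall>b\<in>B. density_op (\<sigma> b)" and "norm x = 1"
  shows "state_fidelity B E \<sigma> x \<le> real CARD('d phases)"
proof -
  have "state_fidelity B E \<sigma> x \<le> (\<Sum>b\<in>B. Re (qform (E b) x) * real CARD('d phases))"
    unfolding state_fidelity_def
    using assms by (intro sum_mono mult_left_mono density_op_qform_le povm_qform_nonneg) auto
  also have "\<dots> = real CARD('d phases)"
    using sum_povm_qform[OF assms(1,3)] by (simp flip: sum_distrib_right)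
  finally show ?thesis .
qed

lemma avg_fidelity_sums:
  fixes \<psi> :: "nat \<Rightarrow> complex^'d::finite"
  assumes "pure_ensemble \<psi> p" and "is_povm B E" and "\<forall>b\<in>B. density_op (\<sigma> b)"
  shows "(\<lambda>i. p i * state_fidelity B E \<sigma> (\<psi> i)) sums avg_fidelity \<psi> p B E \<sigma>"
proof -
  have unit: "norm (\<psi> i) = 1" and "0 \<le> p i" for i
    using assms(1) by (auto simp: pure_ensemble_def)
  have "p sums 1"
    using assms(1) by (simp add: pure_ensemble_def)
  have "finite B"
    using assms(2) by (simp add: is_povm_def)
  define t where
    "t b = (\<lambda>i. p i * (Re (qform (E b) (\<psi> i)) * Re (qform (\<sigma> b) (\<psi> i))))" for b
  have "summable (t b)" if "b \<in> B" for b
  proof (rule summable_comparison_test')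
    show "summable (\<lambda>i. p i * real CARD('d phases))"
      using \<open>p sums 1\<close> by (intro summable_mult2 sums_summable)
    fix i
    have "Re (qform (E b) (\<psi> i)) * Re (qform (\<sigma> b) (\<psi> i)) \<le> state_fidelity B E \<sigma> (\<psi> i)"
      unfolding state_fidelity_def using assms(2,3) that \<open>finite B\<close>
      by (intro member_le_sum state_fidelity_term_nonneg) auto
    also have "\<dots> \<le> real CARD('d phases)"
      using assms(2,3) unit by (rule state_fidelity_le)
    finally show "norm (t b i) \<le> p i * real CARD('d phases)"
      using \<open>0 \<le> p i\<close> state_fidelity_term_nonneg[OF assms(2,3) that]
      by (simp add: t_def mult_left_mono)
  qed
  then have "(\<lambda>i. \<Sum>b\<in>B. t b i) sums (\<Sum>b\<in>B. suminf (t b))"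
    by (intro sums_sum summable_sums)
  then show ?thesis
    by (simp add: t_def avg_fidelity_def state_fidelity_def ctrace_proj_mult sum_distrib_left
        mult.assoc)
qed

lemma avg_fidelity_le:
  fixes \<psi> :: "nat \<Rightarrow> complex^'d::finite"
  assumes "pure_ensemble \<psi> p" and "is_povm B E" and "\<forall>b\<in>B. density_op (\<sigma> b)"
  shows "avg_fidelity \<psi> p B E \<sigma> \<le> real CARD('d phases)"
proof (rule sums_le)
  show "(\<lambda>i. p i * state_fidelity B E \<sigma> (\<psi> i)) sums avg_fidelity \<psi> p B E \<sigma>"
    using assms by (rule avg_fidelity_sums)
  show "(\<lambda>i. p i * real CARD('d phases)) sums real CARD('d phases)"
    using assms(1) by (rule pure_ensemble_sums_mult)
  show "p i * state_fidelity B E \<sigma> (\<psi> i) \<le> p i * real CARD('d phases)" for i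
    using assms by (intro mult_left_mono state_fidelity_le) (auto simp: pure_ensemble_def)
qed

lemma avg_fidelity_le_accessible_fidelity:
  assumes "pure_ensemble \<psi> p" and "is_povm B E" and "\<forall>b\<in>B. density_op (\<sigma> b)"
  shows "avg_fidelity \<psi> p B E \<sigma> \<le> accessible_fidelity \<psi> p"
proof -
  have "bdd_above
      {avg_fidelity \<psi> p B E \<sigma> | B E \<sigma>. is_povm B E \<and> (\<forall>b\<in>B. density_op (\<sigma> b))}"
    using avg_fidelity_le[OF assms(1)] by (intro bdd_aboveI) blast
  with assms(2,3) show ?thesis
    unfolding accessible_fidelity_def by (blast intro: cSup_upper)
qed

lemma accessible_fidelity_ge_strategy:
  fixes \<psi> :: "nat \<Rightarrow> complex^'d::finite" and E \<sigma> :: "'o::finite \<Rightarrow> complex^'d^'d"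
  assumes "pure_ensemble \<psi> p"
    and "(\<Sum>y\<in>UNIV. E y) = mat 1" and "\<And>y. positive_op (E y)" and "\<And>y. density_op (\<sigma> y)"
    and "\<And>x. norm x = 1 \<Longrightarrow> F \<le> state_fidelity UNIV E \<sigma> x"
  shows "F \<le> accessible_fidelity \<psi> p"
proof -
  obtain g :: "nat \<Rightarrow> 'o" where g: "bij_betw g {0..<CARD('o)} UNIV"
    using ex_bij_betw_nat_finite[of "UNIV :: 'o set"] by auto
  define B where "B = {0..<CARD('o)}"
  have povm: "is_povm B (\<lambda>b. E (g b))"
    using assms(2,3) sum.reindex_bij_betw[OF g, of E] by (simp add: is_povm_def B_def)
  have states: "\<forall>b\<in>B. density_op (\<sigma> (g b))"
    using assms(4) by simp
  have "F \<le> avg_fidelity \<psi> p B (\<lambda>b. E (g b)) (\<lambda>b. \<sigma> (g b))"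
  proof (rule sums_le)
    show "(\<lambda>i. p i * F) sums F"
      using assms(1) by (rule pure_ensemble_sums_mult)
    show "(\<lambda>i. p i * state_fidelity B (\<lambda>b. E (g b)) (\<lambda>b. \<sigma> (g b)) (\<psi> i)) sums
        avg_fidelity \<psi> p B (\<lambda>b. E (g b)) (\<lambda>b. \<sigma> (g b))"
      using assms(1) povm states by (rule avg_fidelity_sums)
    have "state_fidelity B (\<lambda>b. E (g b)) (\<lambda>b. \<sigma> (g b)) x = state_fidelity UNIV E \<sigma> x" for x
      unfolding state_fidelity_def B_def using sum.reindex_bij_betw[OF g] by simp
    then show "p i * F \<le> p i * state_fidelity B (\<lambda>b. E (g b)) (\<lambda>b. \<sigma> (g b)) (\<psi> i)" for i
      using assms(1,5) by (auto simp: pure_ensemble_def intro: mult_left_mono)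
  qed
  also have "\<dots> \<le> accessible_fidelity \<psi> p"
    using assms(1) povm states by (rule avg_fidelity_le_accessible_fidelity)
  finally show ?thesis .
qed

section \<open>The basis-and-phase strategy\<close>

lemma sum_UNIV_Plus:
  "(\<Sum>y\<in>UNIV. g y) = (\<Sum>j\<in>UNIV. g (Inl j)) + (\<Sum>f\<in>UNIV. g (Inr f))"
  for g :: "'a::finite + 'b::finite \<Rightarrow> 'c::comm_monoid_add"
  by (subst UNIV_Plus_UNIV[symmetric], subst sum.Plus) (auto simp: comp_def)

lemma sum_proj_axis: "(\<Sum>j\<in>UNIV. proj (axis j 1)) = (mat 1 :: complex^'d::finite^'d)"
  by (auto simp: vec_eq_iff proj_def axis_def mat_def if_distrib[of cnj]
      if_distrib[of "\<lambda>z. z * _"] cong: if_cong)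

lemma sum_proj_phase_vec:
  "(\<Sum>f\<in>UNIV. proj (phase_vec f)) = real CARD('d phases) *\<^sub>R (mat 1 :: complex^'d::finite^'d)"
  by (auto simp: vec_eq_iff proj_def phase_vec_def mat_def phase_moment2 mult.commute[of "phase _"]
      scaleR_conv_of_real[where 'a=complex])

definition outcome_vec :: "'d + 'd phases \<Rightarrow> complex^'d" where
  "outcome_vec y = (case y of Inl j \<Rightarrow> axis j 1 | Inr f \<Rightarrow> phase_vec f)"

definition basis_phase_povm :: "'d::finite + 'd phases \<Rightarrow> complex^'d^'d" where
  "basis_phase_povm y = (case y of
      Inl _ \<Rightarrow> 1 / (real CARD('d) + 1)
    | Inr _ \<Rightarrow> real CARD('d) / ((real CARD('d) + 1) * real CARD('d phases)))
    *\<^sub>R proj (outcome_vec y)"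

definition basis_phase_states :: "'d::finite + 'd phases \<Rightarrow> complex^'d^'d" where
  "basis_phase_states y =
    (case y of Inl _ \<Rightarrow> 1 | Inr _ \<Rightarrow> 1 / real CARD('d)) *\<^sub>R proj (outcome_vec y)"

lemma positive_op_basis_phase_povm: "positive_op (basis_phase_povm y)"
  unfolding basis_phase_povm_def by (rule positive_op_scaleR_proj) (simp split: sum.split)

lemma sum_basis_phase_povm: "(\<Sum>y\<in>UNIV. basis_phase_povm y) = (mat 1 :: complex^'d::finite^'d)"
proof -
  define d where "d = real CARD('d)"
  have "d > 0"
    by (simp add: d_def)
  have "(\<Sum>y\<in>UNIV. basis_phase_povm y :: complex^'d^'d) =
      (1 / (d + 1)) *\<^sub>R (\<Sum>j\<in>UNIV. proj (axis j 1)) +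
      (d / ((d + 1) * real CARD('d phases))) *\<^sub>R (\<Sum>f\<in>UNIV. proj (phase_vec f))"
    by (simp add: sum_UNIV_Plus basis_phase_povm_def outcome_vec_def d_def scaleR_sum_right)
  also have "\<dots> = (1 / (d + 1) + d / (d + 1)) *\<^sub>R (mat 1 :: complex^'d^'d)"
    by (simp add: sum_proj_axis sum_proj_phase_vec scaleR_add_left)
  also have "1 / (d + 1) + d / (d + 1) = 1"
    using \<open>d > 0\<close> by (simp add: field_simps)
  finally show ?thesis
    by simp
qed

lemma density_op_basis_phase_states: "density_op (basis_phase_states y)"
  by (cases y) (simp_all add: density_op_def basis_phase_states_def outcome_vec_def phase_vec_def
      positive_op_proj positive_op_scaleR_proj ctrace_scaleR ctrace_proj norm_vec_power2)

lemma state_fidelity_basis_phase: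
  fixes x :: "complex^'d::finite"
  assumes "norm x = 1"
  shows "state_fidelity UNIV basis_phase_povm basis_phase_states x = 2 / (real CARD('d) + 1)"
proof -
  define d where "d = real CARD('d)"
  define N where "N = real CARD('d phases)"
  define Q where "Q = (\<Sum>j\<in>UNIV. (cmod (x $ j))^4)"
  have "d > 0" "N > 0"
    by (simp_all add: d_def N_def)
  have "state_fidelity UNIV basis_phase_povm basis_phase_states x =
      1 / (d + 1) * Q +
      d / ((d + 1) * N) * (1 / d) * (\<Sum>f\<in>UNIV. (cmod (cinner (phase_vec f) x))^4)"
    by (simp add: state_fidelity_def sum_UNIV_Plus basis_phase_povm_def basis_phase_states_def
        Re_qform_scaleR_proj outcome_vec_def cinner_axis d_def N_def Q_def sum_distrib_left
        power4_eq_xxxx power2_eq_square mult_ac)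
  also have "\<dots> = 1 / (d + 1) * Q + d / ((d + 1) * N) * (1 / d) * (N * (2 - Q))"
    using assms by (simp add: sum_norm_cinner_phase_vec_pow4 N_def Q_def)
  also have "\<dots> = 1 / (d + 1) * Q + (2 - Q) / (d + 1)"
    using \<open>d > 0\<close> \<open>N > 0\<close> by simp
  also have "\<dots> = 2 / (d + 1)"
    by (simp add: add_divide_distrib[symmetric])
  finally show ?thesis
    by (simp add: d_def)
qed

theorem theorem1:
  fixes \<psi> :: "nat \<Rightarrow> complex^'d" and p :: "nat \<Rightarrow> real"
  assumes "pure_ensemble \<psi> p"
  shows "accessible_fidelity \<psi> p \<ge> 2 / (real CARD('d) + 1)"
  using assms sum_basis_phase_povm positive_op_basis_phase_povm density_op_basis_phase_states
  by (rule accessible_fidelity_ge_strategy[where \<sigma> = basis_phase_states])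
     (simp add: state_fidelity_basis_phase)

end
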